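(* Let $\mathcal{C}$ be a nonempty class of scoring rules, each of the form \[g(x,q)=\begin{cases}\int_x^q (v-x)\,d\lambda(v) & \text{if } x\le q,\\ \int_q^x (x-v)\,d\lambda(v) & \text{if } x>q,\end{cases}\] where $\lambda$ is a measure on $\mathbb{R}$ that is mutually absolutely continuous with Lebesgue measure and finite on every bounded interval (the measure $\lambda$ may differ between members of $\mathcal{C}$). Let $\{(X_i,B_i):i\in I\}$ be a collection of pairs, each consisting of a random variable $X_i$ and a nonempty event $B_i$, with conditional previsions (forecasts) $p_i=P(X_i\mid B_i)\in\mathbb{R}\cup\{\pm\infty\}$. Then the collection $\{p_i:i\in I\}$ is coherent$_1$ if and only if it is coherent$_3$ with respect to $\mathcal{C}$.
   Context: Let $\Omega$ be a nonempty set of states $\omega$; events are subsets of $\Omega$ and random variables are real-valued functions on $\Omega$. An event $B$ is identified with its indicator function, so $B(\omega)=1$ if $\omega\in B$ and $0$ otherwise. A conditional prevision $P(X\mid B)$ is an extended real number. Coherence$_1$: a collection $\{P(X_i\mid B_i):i\in I\}$ is coherent$_1$ if for every finite $\{i_1,\dots,i_n\}\subseteq I$, all real $\alpha_1,\dots,\alpha_n$ with $\alpha_j\ge 0$ whenever $P(X_{i_j}\mid B_{i_j})=+\infty$ and $\alpha_j\le 0$ whenever $P(X_{i_j}\mid B_{i_j})=-\infty$, and all real $c_1,\dots,c_n$ with $c_j=P(X_{i_j}\mid B_{i_j})$ whenever that prevision is finite, we have $\sup_\omega \sum_{j=1}^n \alpha_j B_{i_j}(\omega)[X_{i_j}(\omega)-c_j]\ge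 0$. Coherence$_3$ (with respect to a class $\mathcal{C}$ of scoring rules): forecasts $\{p_i:i\in I\}$ for the pairs $(X_i,B_i)$ are coherent$_3$ if for every finite $\{i_1,\dots,i_n\}\subseteq I$, every $g_1,\dots,g_n\in\mathcal{C}$, every set of real alternative forecasts $q_1,\dots,q_n$, and every choice of reals $c_1,\dots,c_n$ with $c_j=p_{i_j}$ when $p_{i_j}$ is finite and $c_j$ finite and lying between $q_j$ and $p_{i_j}$ when $p_{i_j}$ is infinite, we have \[\inf_\omega \sum_{j=1}^n B_{i_j}(\omega)\big[g_j(X_{i_j}(\omega),c_j)-g_j(X_{i_j}(\omega),q_j)\big]\le 0.\] *)

theory Defs
  imports "HOL-Analysis.Analysis"
begin

definition admissible_measure :: "real measure \<Rightarrow> bool" where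
  "admissible_measure lam \<longleftrightarrow>
     sets lam = sets borel \<and>
     absolutely_continuous lborel lam \<and> absolutely_continuous lam lborel \<and>
     (\<forall>a b. emeasure lam {a..b} < \<infinity>)"

definition score :: "real measure \<Rightarrow> real \<Rightarrow> real \<Rightarrow> real" where
  "score lam x q =
     (if x \<le> q then (LINT v:{x..q}|lam. v - x) else (LINT v:{q..x}|lam. x - v))"

definition coherent1 :: "('i \<Rightarrow> 'w \<Rightarrow> real) \<Rightarrow> ('i \<Rightarrow> 'w set) \<Rightarrow> ('i \<Rightarrow> ereal) \<Rightarrow> bool" where
  "coherent1 X B P \<longleftrightarrow>
     (\<forall>J :: 'i set. \<forall>\<alpha> c :: 'i \<Rightarrow> real. finite J \<longrightarrow>
        (\<forall>j\<in>J. P j = \<infinity> \<longrightarrow> \<alpha> j \<ge> 0) \<longrightarrow>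
        (\<forall>j\<in>J. P j = -\<infinity> \<longrightarrow> \<alpha> j \<le> 0) \<longrightarrow>
        (\<forall>j\<in>J. \<bar>P j\<bar> \<noteq> \<infinity> \<longrightarrow> ereal (c j) = P j) \<longrightarrow>
        (SUP \<omega>. ereal (\<Sum>j\<in>J. \<alpha> j * indicator (B j) \<omega> * (X j \<omega> - c j))) \<ge> 0)"

definition coherent3 :: "(real \<Rightarrow> real \<Rightarrow> real) set \<Rightarrow> ('i \<Rightarrow> 'w \<Rightarrow> real) \<Rightarrow> ('i \<Rightarrow> 'w set) \<Rightarrow> ('i \<Rightarrow> ereal) \<Rightarrow> bool" where
  "coherent3 C X B P \<longleftrightarrow>
     (\<forall>J :: 'i set. \<forall>g :: 'i \<Rightarrow> real \<Rightarrow> real \<Rightarrow> real. \<forall>q c :: 'i \<Rightarrow> real. finite J \<longrightarrow>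
        (\<forall>j\<in>J. g j \<in> C) \<longrightarrow>
        (\<forall>j\<in>J. \<bar>P j\<bar> \<noteq> \<infinity> \<longrightarrow> ereal (c j) = P j) \<longrightarrow>
        (\<forall>j\<in>J. P j = \<infinity> \<longrightarrow> q j \<le> c j) \<longrightarrow>
        (\<forall>j\<in>J. P j = -\<infinity> \<longrightarrow> c j \<le> q j) \<longrightarrow>
        (INF \<omega>. ereal (\<Sum>j\<in>J. indicator (B j) \<omega> *
            (g j (X j \<omega>) (c j) - g j (X j \<omega>) (q j)))) \<le> 0)"

end

(*
  Write m(q, c) for the signed lam-mass of the interval from q to c. The score difference
  g(x, c) - g(x, q) equals m(q, c) (c - x) plus a remainder lying between (q - c) m(q, c) and 0.
  Hence a coherence-3 comparison against alternatives q is, up to the remainder, minus the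
  coherence-1 gamble with stakes m(q_j, c_j); the sign of the remainder gives 1 => 3.
  Conversely, since lam has no atoms and charges every nondegenerate interval, the intermediate
  value theorem realises any stakes alpha as t * alpha by alternatives within delta of c, and the
  remainder then costs at most delta t sum |alpha_j|: a uniformly negative coherence-1 gamble
  becomes a uniformly positive score gain, which gives 3 => 1.
*)

theory Submission
  imports Defs "HOL-Probability.Distribution_Functions"
begin

section \<open>Admissible measures\<close>

lemma admissible_sets: "admissible_measure lam \<Longrightarrow> sets lam = sets borel"
  by (simp add: admissible_measure_def)

lemma admissible_sets_borel [measurable]:
  "admissible_measure lam \<Longrightarrow> A \<in> sets borel \<Longrightarrow> A \<in> sets lam"
  by (simp add: admissible_measure_def)

lemma admissible_space: "admissible_measure lam \<Longrightarrow> space lam = UNIV"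
  using sets_eq_imp_space_eq[OF admissible_sets] by simp

lemma admissible_emeasure_interval_finite:
  "admissible_measure lam \<Longrightarrow> emeasure lam {a..b} < \<infinity>"
  by (simp add: admissible_measure_def)

lemma admissible_fmeasurable_interval:
  "admissible_measure lam \<Longrightarrow> {a..b} \<in> fmeasurable lam"
  using admissible_emeasure_interval_finite[of lam a b] by (auto simp: fmeasurable_def)

lemma admissible_finite_null:
  assumes "admissible_measure lam" and "finite S"
  shows "S \<in> null_sets lam"
  using assms finite_imp_null_set_lborel[of S]
  by (auto simp: admissible_measure_def absolutely_continuous_def)

lemma admissible_measure_finite: "admissible_measure lam \<Longrightarrow> finite S \<Longrightarrow> measure lam S = 0"
  using admissible_finite_null[of lam S] by (simp add: measure_def null_setsD1)

lemma admissible_AE_notin_finite: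
  "admissible_measure lam \<Longrightarrow> finite S \<Longrightarrow> AE v in lam. v \<notin> S"
  by (intro AE_not_in admissible_finite_null)

lemma admissible_measure_interval_pos:
  assumes adm: "admissible_measure lam" and "a < b"
  shows "0 < measure lam {a..b}"
proof (rule ccontr)
  assume "\<not> 0 < measure lam {a..b}"
  then have "measure lam {a..b} = 0"
    using measure_nonneg[of lam "{a..b}"] by linarith
  moreover have "emeasure lam {a..b} \<noteq> \<infinity>"
    using admissible_emeasure_interval_finite[OF adm, of a b] by simp
  ultimately have "{a..b} \<in> null_sets lam"
    using adm emeasure_eq_ennreal_measure[of lam "{a..b}"] by (intro null_setsI) simp_all
  moreover have "null_sets lam \<subseteq> null_sets lborel"
    using adm by (simp add: admissible_measure_def absolutely_continuous_def)
  ultimately have "emeasure lborel {a..b} = 0"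
    by auto
  with \<open>a < b\<close> show False
    by simp
qed

lemma admissible_measure_interval_split:
  assumes adm: "admissible_measure lam" and "a \<le> x" "x \<le> b"
  shows "measure lam {a..b} = measure lam {a..x} + measure lam {x..b}"
proof -
  have "{a..b} = {a..x} \<union> {x..b}"
    using assms by auto
  moreover have "AE v in lam. v \<noteq> x"
    using admissible_AE_notin_finite[OF adm, of "{x}"] by simp
  then have "AE v in lam. v \<notin> {a..x} \<or> v \<notin> {x..b}"
    by eventually_elim auto
  ultimately show ?thesis
    using adm by (simp add: measure_Un_AE admissible_fmeasurable_interval)
qed

text \<open>Points are null, so the distribution function of the restriction of \<open>lam\<close>
  to \<open>{a..b}\<close> is continuous.\<close>
lemma admissible_continuous_on_measure_interval:
  assumes adm: "admissible_measure lam"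
  shows "continuous_on {a..b} (\<lambda>x. measure lam {a..x})"
proof -
  define M where "M = density lam (indicator {a..b})"
  have measure_M: "measure M A = measure lam ({a..b} \<inter> A)" if "A \<in> sets borel" for A
    unfolding M_def using adm that by (intro measure_restricted) auto
  have "emeasure M (space M) = emeasure lam {a..b}"
    using adm by (simp add: M_def admissible_space emeasure_restricted)
  then have "finite_measure M"
    using admissible_emeasure_interval_finite[OF adm, of a b] by (intro finite_measureI) simp
  moreover have "sets M = sets borel"
    using adm by (simp add: M_def admissible_sets)
  ultimately interpret finite_borel_measure M
    by (simp add: finite_borel_measure_def finite_borel_measure_axioms_def)
  have "measure M {x} = 0" for x
    using admissible_measure_finite[OF adm, of "{a..b} \<inter> {x}"] by (simp add: measure_M)
  then have "continuous_on {a..b} (cdf M)"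
    by (intro continuous_at_imp_continuous_on) (simp add: isCont_cdf)
  moreover have cdf_eq: "cdf M x = measure lam {a..x}" if "x \<in> {a..b}" for x
  proof -
    have "cdf M x = measure lam ({a..b} \<inter> {..x})"
      unfolding cdf_def2 by (rule measure_M) simp
    also have "{a..b} \<inter> {..x} = {a..x}"
      using that by auto
    finally show ?thesis .
  qed
  moreover have "continuous_on {a..b} (cdf M) = continuous_on {a..b} (\<lambda>x. measure lam {a..x})"
    by (rule continuous_on_cong[OF refl cdf_eq])
  ultimately show ?thesis
    by simp
qed

section \<open>The score as an integral of a signed indicator\<close>

definition signed_indicator :: "real \<Rightarrow> real \<Rightarrow> real \<Rightarrow> real" where
  "signed_indicator a b v = indicator {a..b} v - indicator {b..a} v"

definition oriented_mass :: "real measure \<Rightarrow> real \<Rightarrow> real \<Rightarrow> real" where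
  "oriented_mass lam a b = (LINT v|lam. signed_indicator a b v)"

lemma integrable_signed_indicator:
  assumes adm: "admissible_measure lam"
  shows "integrable lam (signed_indicator a b)"
    and "integrable lam (\<lambda>v. signed_indicator a b v * (v - x))"
proof -
  have "integrable lam (\<lambda>v. indicator {a..b} v *\<^sub>R (v - x))" for a b
    using adm admissible_emeasure_interval_finite[OF adm]
    by (intro integrableI_bounded_set_indicator[where B="\<bar>a - x\<bar> + \<bar>b - x\<bar>"])
      (auto simp: measurable_cong_sets[OF admissible_sets[OF adm] refl])
  moreover have "integrable lam (indicator {a..b} :: real \<Rightarrow> real)" for a b
    using adm admissible_emeasure_interval_finite[OF adm] by (intro integrable_real_indicator) auto
  ultimately show "integrable lam (signed_indicator a b)"
    and "integrable lam (\<lambda>v. signed_indicator a b v * (v - x))"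
    unfolding signed_indicator_def left_diff_distrib by auto
qed

lemma score_eq_integral_signed_indicator:
  "score lam x q = (LINT v|lam. signed_indicator x q v * (v - x))"
  unfolding score_def set_lebesgue_integral_def signed_indicator_def
  by (auto intro!: Bochner_Integration.integral_cong simp: indicator_def algebra_simps
      simp flip: Bochner_Integration.integral_minus)

lemma oriented_mass_eq:
  assumes adm: "admissible_measure lam"
  shows "oriented_mass lam q c = (if q \<le> c then measure lam {q..c} else - measure lam {c..q})"
proof (cases q c rule: linorder_cases)
  case less
  then have "signed_indicator q c = indicator {q..c}"
    by (auto simp: signed_indicator_def indicator_def fun_eq_iff)
  with less adm show ?thesis
    by (simp add: oriented_mass_def admissible_space)
next
  case equal
  then show ?thesis
    using admissible_measure_finite[OF adm, of "{c}"] by (simp add: oriented_mass_def signed_indicator_def)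
next
  case greater
  then have "signed_indicator q c = (\<lambda>v. - indicator {c..q} v)"
    by (auto simp: signed_indicator_def indicator_def fun_eq_iff)
  with greater adm show ?thesis
    by (simp add: oriented_mass_def admissible_space)
qed

lemma oriented_mass_nonneg_iff:
  "admissible_measure lam \<Longrightarrow> 0 \<le> oriented_mass lam q c \<longleftrightarrow> q \<le> c"
  using admissible_measure_interval_pos[of lam c q] by (auto simp: oriented_mass_eq)

lemma oriented_mass_nonpos_iff:
  "admissible_measure lam \<Longrightarrow> oriented_mass lam q c \<le> 0 \<longleftrightarrow> c \<le> q"
  using admissible_measure_interval_pos[of lam q c] admissible_measure_finite[of lam "{c}"]
  by (cases "q = c") (auto simp: oriented_mass_eq)

section \<open>Comparing the scores of two forecasts\<close>

lemma score_diff_eq: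
  assumes adm: "admissible_measure lam"
  shows "score lam x c - score lam x q
    = oriented_mass lam q c * (c - x) + (LINT v|lam. signed_indicator q c v * (v - c))"
proof -
  note integrable = integrable_signed_indicator[OF adm]
  have "AE v in lam. v \<notin> {x, q, c}"
    by (rule admissible_AE_notin_finite[OF adm]) simp
  moreover have "signed_indicator x c v * (v - x) - signed_indicator x q v * (v - x)
      = signed_indicator q c v * (v - c) + (c - x) * signed_indicator q c v" if "v \<notin> {x, q, c}" for v
  proof -
    have "signed_indicator x c v * (v - x) - signed_indicator x q v * (v - x)
        = (signed_indicator x c v - signed_indicator x q v) * (v - x)"
      by (simp add: left_diff_distrib)
    also have "\<dots> = signed_indicator q c v * (v - x)"
      using that by (auto simp: signed_indicator_def indicator_def)
    finally show ?thesis
      by (simp add: algebra_simps)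
  qed
  ultimately have "AE v in lam. signed_indicator x c v * (v - x) - signed_indicator x q v * (v - x)
      = signed_indicator q c v * (v - c) + (c - x) * signed_indicator q c v"
    by (auto elim: AE_mp)
  have "score lam x c - score lam x q
      = (LINT v|lam. signed_indicator x c v * (v - x) - signed_indicator x q v * (v - x))"
    using integrable by (simp add: score_eq_integral_signed_indicator)
  also have "\<dots> = (LINT v|lam. signed_indicator q c v * (v - c) + (c - x) * signed_indicator q c v)"
    using integrable \<open>AE v in lam. _ = _\<close>
    by (intro integral_cong_AE) (auto intro: borel_measurable_integrable)
  also have "\<dots> = (LINT v|lam. signed_indicator q c v * (v - c)) + (c - x) * oriented_mass lam q c"
    using integrable by (simp add: oriented_mass_def)
  finally show ?thesis
    by (simp add: algebra_simps)
qed

lemma score_diff_le: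
  assumes adm: "admissible_measure lam"
  shows "score lam x c - score lam x q \<le> oriented_mass lam q c * (c - x)"
proof -
  have "(LINT v|lam. signed_indicator q c v * (v - c)) \<le> (LINT v|lam. 0)"
    by (intro integral_mono integrable_signed_indicator[OF adm] integrable_zero)
      (auto simp: signed_indicator_def indicator_def)
  then show ?thesis
    by (simp add: score_diff_eq[OF adm])
qed

lemma score_diff_ge:
  assumes adm: "admissible_measure lam"
  shows "oriented_mass lam q c * (c - x) - \<bar>q - c\<bar> * \<bar>oriented_mass lam q c\<bar>
    \<le> score lam x c - score lam x q"
proof -
  have "(LINT v|lam. (q - c) * signed_indicator q c v) \<le> (LINT v|lam. signed_indicator q c v * (v - c))"
    by (intro integral_mono integrable_signed_indicator[OF adm] integrable_mult_right)
      (auto simp: signed_indicator_def indicator_def)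
  moreover have "- (\<bar>q - c\<bar> * \<bar>oriented_mass lam q c\<bar>) \<le> (q - c) * oriented_mass lam q c"
    using abs_ge_minus_self[of "(q - c) * oriented_mass lam q c"] by (simp add: abs_mult)
  ultimately show ?thesis
    by (simp add: score_diff_eq[OF adm] oriented_mass_def)
qed

lemma oriented_mass_attains:
  assumes adm: "admissible_measure lam" and "0 \<le> \<delta>"
    and "- measure lam {c..c + \<delta>} \<le> y" "y \<le> measure lam {c - \<delta>..c}"
  shows "\<exists>q. \<bar>q - c\<bar> \<le> \<delta> \<and> oriented_mass lam q c = y"
proof -
  define f where "f q = measure lam {c - \<delta>..c} - measure lam {c - \<delta>..q}" for q
  have f_eq: "f q = oriented_mass lam q c" if "q \<in> {c - \<delta>..c + \<delta>}" for q
    using that admissible_measure_interval_split[OF adm, of "c - \<delta>" q c]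
      admissible_measure_interval_split[OF adm, of "c - \<delta>" c q]
    by (auto simp: f_def oriented_mass_eq[OF adm])
  have "continuous_on {c - \<delta>..c + \<delta>} f"
    unfolding f_def by (intro continuous_intros admissible_continuous_on_measure_interval adm)
  moreover have "f (c + \<delta>) \<le> y" "y \<le> f (c - \<delta>)"
    using assms f_eq[of "c + \<delta>"] admissible_measure_finite[OF adm, of "{c - \<delta>}"]
    by (auto simp: f_def oriented_mass_eq[OF adm])
  ultimately obtain q where "c - \<delta> \<le> q" "q \<le> c + \<delta>" "f q = y"
    using IVT2'[of f "c + \<delta>" y "c - \<delta>"] \<open>0 \<le> \<delta>\<close> by auto
  then show ?thesis
    using f_eq[of q] by (intro exI[of _ q]) auto
qed

lemma exists_proportional_oriented_masses:
  fixes \<alpha> c :: "'i \<Rightarrow> real"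
  assumes adm: "admissible_measure lam" and "finite J" and "0 < \<delta>"
  shows "\<exists>t > 0. \<exists>q. \<forall>j\<in>J. \<bar>q j - c j\<bar> \<le> \<delta> \<and> oriented_mass lam (q j) (c j) = t * \<alpha> j"
proof -
  define \<mu> where "\<mu> j = min (measure lam {c j - \<delta>..c j}) (measure lam {c j..c j + \<delta>})" for j
  have \<mu>_pos: "0 < \<mu> j" for j
    using admissible_measure_interval_pos[OF adm] \<open>0 < \<delta>\<close> by (simp add: \<mu>_def)
  define t where "t = Min (insert 1 ((\<lambda>j. \<mu> j / (\<bar>\<alpha> j\<bar> + 1)) ` J))"
  have "0 < t"
    using \<open>finite J\<close> \<mu>_pos by (auto simp: t_def)
  have "- measure lam {c j..c j + \<delta>} \<le> t * \<alpha> j \<and> t * \<alpha> j \<le> measure lam {c j - \<delta>..c j}"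
    if "j \<in> J" for j
  proof -
    have "t \<le> \<mu> j / (\<bar>\<alpha> j\<bar> + 1)"
      using \<open>finite J\<close> that by (auto simp: t_def)
    then have "t * (\<bar>\<alpha> j\<bar> + 1) \<le> \<mu> j"
      by (simp add: field_simps)
    then have "\<bar>t * \<alpha> j\<bar> \<le> \<mu> j"
      using \<open>0 < t\<close> by (simp add: abs_mult algebra_simps)
    then show ?thesis
      by (auto simp: \<mu>_def abs_le_iff min_def split: if_splits)
  qed
  then have "\<forall>j\<in>J. \<exists>q. \<bar>q - c j\<bar> \<le> \<delta> \<and> oriented_mass lam q (c j) = t * \<alpha> j"
    using \<open>0 < \<delta>\<close> \<open>0 < t\<close>
    by (intro ballI oriented_mass_attains[OF adm]) auto
  from bchoice[OF this] obtain q
    where "\<forall>j\<in>J. \<bar>q j - c j\<bar> \<le> \<delta> \<and> oriented_mass lam (q j) (c j) = t * \<alpha> j"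
    by blast
  with \<open>0 < t\<close> show ?thesis
    by blast
qed

lemma score_diff_ge_proportional:
  assumes adm: "admissible_measure lam"
    and "\<bar>q - c\<bar> \<le> \<delta>" "oriented_mass lam q c = t * a" "0 \<le> t"
  shows "t * a * (c - x) - \<delta> * t * \<bar>a\<bar> \<le> score lam x c - score lam x q"
proof -
  have "\<bar>q - c\<bar> * \<bar>t * a\<bar> \<le> \<delta> * \<bar>t * a\<bar>"
    using assms(2) by (rule mult_right_mono) simp
  also have "\<dots> = \<delta> * t * \<bar>a\<bar>"
    using \<open>0 \<le> t\<close> by (simp add: abs_mult)
  finally show ?thesis
    using score_diff_ge[OF adm, of q c x] unfolding assms(3) by linarith
qed

lemma score_gain_ge_scaled_gamble:
  fixes \<alpha> c q :: "'i \<Rightarrow> real" and x :: "'i \<Rightarrow> real" and B :: "'i \<Rightarrow> 'w set"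
  assumes adm: "admissible_measure lam" and "0 \<le> t" "0 \<le> \<delta>"
    and q: "\<And>j. j \<in> J \<Longrightarrow> \<bar>q j - c j\<bar> \<le> \<delta> \<and> oriented_mass lam (q j) (c j) = t * \<alpha> j"
  shows "- t * (\<Sum>j\<in>J. \<alpha> j * indicator (B j) \<omega> * (x j - c j)) - \<delta> * t * (\<Sum>j\<in>J. \<bar>\<alpha> j\<bar>)
    \<le> (\<Sum>j\<in>J. indicator (B j) \<omega> * (score lam (x j) (c j) - score lam (x j) (q j)))"
proof -
  have "- t * (\<alpha> j * indicator (B j) \<omega> * (x j - c j)) - \<delta> * t * \<bar>\<alpha> j\<bar>
      \<le> indicator (B j) \<omega> * (score lam (x j) (c j) - score lam (x j) (q j))" if "j \<in> J" for j
  proof -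
    have "t * \<alpha> j * (c j - x j) - \<delta> * t * \<bar>\<alpha> j\<bar> \<le> score lam (x j) (c j) - score lam (x j) (q j)"
      using q[OF that] \<open>0 \<le> t\<close> by (intro score_diff_ge_proportional[OF adm]) auto
    moreover have "0 \<le> \<delta> * t * \<bar>\<alpha> j\<bar>"
      using \<open>0 \<le> \<delta>\<close> \<open>0 \<le> t\<close> by simp
    ultimately show ?thesis
      by (cases "\<omega> \<in> B j") (simp_all add: algebra_simps)
  qed
  then have "(\<Sum>j\<in>J. - t * (\<alpha> j * indicator (B j) \<omega> * (x j - c j)) - \<delta> * t * \<bar>\<alpha> j\<bar>)
      \<le> (\<Sum>j\<in>J. indicator (B j) \<omega> * (score lam (x j) (c j) - score lam (x j) (q j)))"
    by (rule sum_mono)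
  then show ?thesis
    by (simp only: sum_subtractf sum_distrib_left)
qed

section \<open>The two notions of coherence\<close>

lemma ereal_SUP_less_zeroE:
  fixes F :: "'w \<Rightarrow> real"
  assumes "(SUP \<omega>. ereal (F \<omega>)) < 0"
  obtains s where "0 < s" and "\<And>\<omega>. F \<omega> \<le> - s"
proof -
  obtain z where z: "(SUP \<omega>. ereal (F \<omega>)) < ereal z" "ereal z < 0"
    using ereal_dense2[OF assms] by blast
  have "ereal (F \<omega>) < ereal z" for \<omega>
    using SUP_upper[of \<omega> UNIV "\<lambda>\<omega>. ereal (F \<omega>)"] z(1) by (rule order.strict_trans1) simp
  then show ?thesis
    using z(2) by (intro that[of "- z"]) (simp_all add: less_imp_le)
qed

lemma ereal_INF_nonpos_if_dominated:
  fixes f h :: "'w \<Rightarrow> real"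
  assumes "\<And>\<omega>. f \<omega> \<le> - h \<omega>" and "0 \<le> (SUP \<omega>. ereal (h \<omega>))"
  shows "(INF \<omega>. ereal (f \<omega>)) \<le> 0"
proof -
  have "(INF \<omega>. ereal (f \<omega>)) \<le> (INF \<omega>. - ereal (h \<omega>))"
    using assms(1) by (intro INF_mono) auto
  also have "\<dots> = - (SUP \<omega>. ereal (h \<omega>))"
    by (rule ereal_INF_uminus_eq)
  also have "\<dots> \<le> 0"
    using assms(2) by (simp add: ereal_uminus_le_reorder)
  finally show ?thesis .
qed

lemma coherent1_imp_coherent3:
  fixes X :: "'i \<Rightarrow> 'w \<Rightarrow> real" and B :: "'i \<Rightarrow> 'w set" and P :: "'i \<Rightarrow> ereal"
  assumes C: "\<forall>g\<in>C. \<exists>lam. admissible_measure lam \<and> g = score lam"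
    and coh1: "coherent1 X B P"
  shows "coherent3 C X B P"
  unfolding coherent3_def
proof (intro allI impI)
  fix J :: "'i set" and g q c
  assume "finite J" and "\<forall>j\<in>J. g j \<in> C"
    and c: "\<forall>j\<in>J. \<bar>P j\<bar> \<noteq> \<infinity> \<longrightarrow> ereal (c j) = P j"
    and q_pinf: "\<forall>j\<in>J. P j = \<infinity> \<longrightarrow> q j \<le> c j"
    and q_minf: "\<forall>j\<in>J. P j = -\<infinity> \<longrightarrow> c j \<le> q j"
  with C have "\<forall>j\<in>J. \<exists>lam. admissible_measure lam \<and> g j = score lam"
    by blast
  then obtain L where L: "\<And>j. j \<in> J \<Longrightarrow> admissible_measure (L j) \<and> g j = score (L j)"
    by metis
  define \<alpha> where "\<alpha> j = oriented_mass (L j) (q j) (c j)" for j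
  have "0 \<le> \<alpha> j \<longleftrightarrow> q j \<le> c j" "\<alpha> j \<le> 0 \<longleftrightarrow> c j \<le> q j" if "j \<in> J" for j
    using L[OF that] by (simp_all add: \<alpha>_def oriented_mass_nonneg_iff oriented_mass_nonpos_iff)
  with q_pinf q_minf have \<alpha>_pinf: "\<forall>j\<in>J. P j = \<infinity> \<longrightarrow> 0 \<le> \<alpha> j"
    and \<alpha>_minf: "\<forall>j\<in>J. P j = -\<infinity> \<longrightarrow> \<alpha> j \<le> 0"
    by simp_all
  define gain where
    "gain \<omega> = (\<Sum>j\<in>J. indicator (B j) \<omega> * (g j (X j \<omega>) (c j) - g j (X j \<omega>) (q j)))" for \<omega>
  define loss where "loss \<omega> = (\<Sum>j\<in>J. \<alpha> j * indicator (B j) \<omega> * (X j \<omega> - c j))" for \<omega>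
  have sup_loss: "0 \<le> (SUP \<omega>. ereal (loss \<omega>))"
    using coh1 \<open>finite J\<close> c \<alpha>_pinf \<alpha>_minf unfolding coherent1_def loss_def by blast
  have gain_le: "gain \<omega> \<le> - loss \<omega>" for \<omega>
  proof -
    have "indicator (B j) \<omega> * (g j (X j \<omega>) (c j) - g j (X j \<omega>) (q j))
        \<le> - (\<alpha> j * indicator (B j) \<omega> * (X j \<omega> - c j))" if "j \<in> J" for j
    proof -
      have "indicator (B j) \<omega> * (g j (X j \<omega>) (c j) - g j (X j \<omega>) (q j))
          \<le> indicator (B j) \<omega> * (\<alpha> j * (c j - X j \<omega>))"
        using L[OF that] score_diff_le[of "L j" "X j \<omega>" "c j" "q j"]
        by (intro mult_left_mono) (simp_all add: \<alpha>_def)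
      then show ?thesis
        by (simp add: algebra_simps)
    qed
    then show ?thesis
      unfolding gain_def loss_def sum_negf[symmetric] by (rule sum_mono)
  qed
  show "(INF \<omega>. ereal (\<Sum>j\<in>J. indicator (B j) \<omega> *
      (g j (X j \<omega>) (c j) - g j (X j \<omega>) (q j)))) \<le> 0"
    using ereal_INF_nonpos_if_dominated[of gain loss, OF gain_le sup_loss] by (simp add: gain_def)
qed

lemma coherent3_imp_coherent1:
  fixes X :: "'i \<Rightarrow> 'w \<Rightarrow> real" and B :: "'i \<Rightarrow> 'w set" and P :: "'i \<Rightarrow> ereal"
  assumes adm: "admissible_measure lam" and "score lam \<in> C"
    and coh3: "coherent3 C X B P"
  shows "coherent1 X B P"
  unfolding coherent1_def
proof (intro allI impI)
  fix J :: "'i set" and \<alpha> c :: "'i \<Rightarrow> real"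
  assume "finite J"
    and \<alpha>_pinf: "\<forall>j\<in>J. P j = \<infinity> \<longrightarrow> 0 \<le> \<alpha> j"
    and \<alpha>_minf: "\<forall>j\<in>J. P j = -\<infinity> \<longrightarrow> \<alpha> j \<le> 0"
    and c: "\<forall>j\<in>J. \<bar>P j\<bar> \<noteq> \<infinity> \<longrightarrow> ereal (c j) = P j"
  define F where "F \<omega> = (\<Sum>j\<in>J. \<alpha> j * indicator (B j) \<omega> * (X j \<omega> - c j))" for \<omega>
  show "0 \<le> (SUP \<omega>. ereal (\<Sum>j\<in>J. \<alpha> j * indicator (B j) \<omega> * (X j \<omega> - c j)))"
  proof (rule ccontr)
    assume "\<not> ?thesis"
    then have "(SUP \<omega>. ereal (F \<omega>)) < 0"
      by (simp add: F_def not_le)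
    then obtain s where "0 < s" and F_le: "\<And>\<omega>. F \<omega> \<le> - s"
      using ereal_SUP_less_zeroE by blast
    define A where "A = (\<Sum>j\<in>J. \<bar>\<alpha> j\<bar>)"
    \<comment> \<open>small enough that the remainders eat at most half of the margin \<open>s\<close>\<close>
    define \<delta> where "\<delta> = s / (2 * (A + 1))"
    have "0 \<le> A"
      by (simp add: A_def sum_nonneg)
    then have "0 < \<delta>" and \<delta>A: "\<delta> * A \<le> s / 2"
      using \<open>0 < s\<close> by (simp_all add: \<delta>_def divide_le_eq frac_le)
    obtain t q where "0 < t"
      and q: "\<And>j. j \<in> J \<Longrightarrow> \<bar>q j - c j\<bar> \<le> \<delta> \<and> oriented_mass lam (q j) (c j) = t * \<alpha> j"
      using exists_proportional_oriented_masses[OF adm \<open>finite J\<close> \<open>0 < \<delta>\<close>] by blast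
    have "q j \<le> c j \<longleftrightarrow> 0 \<le> \<alpha> j" "c j \<le> q j \<longleftrightarrow> \<alpha> j \<le> 0" if "j \<in> J" for j
      using q[OF that] \<open>0 < t\<close> oriented_mass_nonneg_iff[OF adm, of "q j" "c j"]
        oriented_mass_nonpos_iff[OF adm, of "q j" "c j"]
      by (simp_all add: zero_le_mult_iff mult_le_0_iff)
    then have "(INF \<omega>. ereal (\<Sum>j\<in>J. indicator (B j) \<omega> *
        (score lam (X j \<omega>) (c j) - score lam (X j \<omega>) (q j)))) \<le> 0"
      using \<open>finite J\<close> c \<alpha>_pinf \<alpha>_minf \<open>score lam \<in> C\<close>
      by (intro coh3[unfolded coherent3_def, rule_format]) auto
    moreover have "t * s / 2 \<le> (\<Sum>j\<in>J. indicator (B j) \<omega> *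
        (score lam (X j \<omega>) (c j) - score lam (X j \<omega>) (q j)))" for \<omega>
    proof -
      have "t * s \<le> - t * F \<omega>"
        using mult_left_mono[OF F_le[of \<omega>], of t] \<open>0 < t\<close> by simp
      moreover have "\<delta> * t * A \<le> t * s / 2"
        using mult_left_mono[OF \<delta>A, of t] \<open>0 < t\<close> by (simp add: algebra_simps)
      moreover have "- t * F \<omega> - \<delta> * t * A \<le> (\<Sum>j\<in>J. indicator (B j) \<omega> *
          (score lam (X j \<omega>) (c j) - score lam (X j \<omega>) (q j)))"
        unfolding F_def A_def using q \<open>0 < t\<close> \<open>0 < \<delta>\<close>
        by (intro score_gain_ge_scaled_gamble[OF adm]) auto
      ultimately show ?thesis
        by linarith
    qed
    then have "ereal (t * s / 2) \<le> (INF \<omega>. ereal (\<Sum>j\<in>J. indicator (B j) \<omega> *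
        (score lam (X j \<omega>) (c j) - score lam (X j \<omega>) (q j))))"
      by (intro INF_greatest) simp
    ultimately have "ereal (t * s / 2) \<le> 0"
      by (simp only: order.trans)
    with mult_pos_pos[OF \<open>0 < t\<close> \<open>0 < s\<close>] show False
      by simp
  qed
qed

theorem theorem4p1:
  fixes C :: "(real \<Rightarrow> real \<Rightarrow> real) set"
    and X :: "'i \<Rightarrow> 'w \<Rightarrow> real" and B :: "'i \<Rightarrow> 'w set" and P :: "'i \<Rightarrow> ereal"
  assumes "C \<noteq> {}"
    and "\<forall>g\<in>C. \<exists>lam. admissible_measure lam \<and> g = score lam"
    and "\<forall>i. B i \<noteq> {}"
  shows "coherent1 X B P \<longleftrightarrow> coherent3 C X B P"
proof
  show "coherent1 X B P \<Longrightarrow> coherent3 C X B P"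
    using assms(2) by (rule coherent1_imp_coherent3)
  obtain g where "g \<in> C"
    using assms(1) by blast
  with assms(2) obtain lam where "admissible_measure lam" "score lam \<in> C"
    by auto
  then show "coherent3 C X B P \<Longrightarrow> coherent1 X B P"
    by (rule coherent3_imp_coherent1)
qed

end
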